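(* Let $T, D, E$ be positive integers ($E$ may also be $0$) and let $k$ be a positive integer with $k \ge 2T \log(D)/\log(2T)$. Let $p_1 < p_2 < \cdots < p_{k+2E}$ be primes with $2T < p_1$, and for each $i$ let $\zeta_i \ne 1$ be a $p_i$-th root of unity in $\mathbb{C}$. Let $f \in \mathbb{Q}[x]$ have at most $T$ nonzero terms and $\deg f \le D$, and suppose we are given values $y_i = f(\zeta_i) + \epsilon_i$, $1 \le i \le k+2E$, where $\epsilon_i \in \mathbb{C}$ and at most $E$ of the $\epsilon_i$ are nonzero. If $g \in \mathbb{Q}[x]$ has at most $T$ nonzero terms, $\deg g \le D$, and $g(\zeta_i) = y_i$ for at least $k+E$ indices $i$, then $g = f$. *)

theory Defs
  imports Complex_Main "HOL-Computational_Algebra.Computational_Algebra"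
begin

definition nterms :: "'a::zero poly \<Rightarrow> nat" where
  "nterms f = card {i. coeff f i \<noteq> 0}"

definition cval :: "rat poly \<Rightarrow> complex \<Rightarrow> complex" where
  "cval f z = poly (map_poly of_rat f) z"

end

theory Submission
  imports Defs "Berlekamp_Zassenhaus.Factor_Bound"
begin

text \<open>
  Put \<open>h = g - f\<close>. If \<open>h \<noteq> 0\<close>, it vanishes at \<open>\<zeta>\<^sub>i\<close> for at least \<open>k\<close> indices, namely
  those where \<open>g\<close> matches an uncorrupted value. Fix such an index and write \<open>p = p\<^sub>i\<close>.
  Reducing the exponents of \<open>h\<close> modulo \<open>p\<close> gives a polynomial of degree \<open>< p\<close> that still
  vanishes at \<open>\<zeta>\<^sub>i\<close>; as \<open>1 + x + \<dots> + x\<^bsup>p-1\<^esup>\<close> is irreducible over \<open>\<rat>\<close> (Eisenstein after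
  \<open>x \<mapsto> x + 1\<close>), all its coefficients are equal. Since \<open>h\<close> has at most \<open>2T < p\<close> terms,
  some residue class mod \<open>p\<close> contains no exponent of \<open>h\<close>, so all these coefficients are \<open>0\<close>,
  and the leading exponent of \<open>h\<close> must share its residue with another exponent. Thus \<open>p\<close>
  divides the product \<open>N\<close> of the differences between \<open>deg h\<close> and the other exponents, and
  the product of at least \<open>k\<close> distinct primes \<open>> 2T\<close> is at most \<open>N \<le> D\<^bsup>2T\<^esup> \<le> (2T)\<^sup>k\<close>, which
  is absurd.
\<close>

(* HOL-Algebra, loaded by Factor_Bound, would otherwise capture these names. *)
hide_const (open) up_ring.monom up_ring.coeff module.smult

lemma eisenstein_criterion:
  fixes G H :: "int poly" and q :: int
  assumes q: "prime q"
    and low: "\<And>i. i < degree (G * H) \<Longrightarrow> q dvd coeff (G * H) i"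
    and const: "\<not> q\<^sup>2 dvd coeff (G * H) 0"
    and lead: "\<not> q dvd lead_coeff (G * H)"
  shows "degree G = 0 \<or> degree H = 0"
proof -
  have cofactor_constant: "degree B = 0" if AB: "A * B = G * H" and qA: "q dvd coeff A 0" for A B
  proof (rule ccontr)
    assume "degree B \<noteq> 0"
    have "A \<noteq> 0" "B \<noteq> 0" using lead AB by auto
    then have deg: "degree (G * H) = degree A + degree B" by (simp add: AB[symmetric] degree_mult_eq)
    have qB: "\<not> q dvd coeff B 0"
    proof
      assume "q dvd coeff B 0"
      with qA have "q * q dvd coeff A 0 * coeff B 0" by (rule mult_dvd_mono)
      with const show False by (simp add: AB[symmetric] coeff_mult_0 power2_eq_square)
    qed
    have lcA: "\<not> q dvd lead_coeff A"
      using lead by (auto simp: AB[symmetric] lead_coeff_mult)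
    define m where "m = (LEAST m. \<not> q dvd coeff A m)"
    have qAm: "\<not> q dvd coeff A m" unfolding m_def by (rule LeastI[of _ "degree A"]) (rule lcA)
    have "q dvd coeff A i" if "i < m" for i
      using not_less_Least that unfolding m_def by blast
    then have "q dvd (\<Sum>i<m. coeff A i * coeff B (m - i))"
      by (intro dvd_sum dvd_mult2) simp
    moreover have "coeff (A * B) m = (\<Sum>i<m. coeff A i * coeff B (m - i)) + coeff A m * coeff B 0"
      by (simp add: coeff_mult lessThan_Suc_atMost[symmetric])
    moreover have "m \<le> degree A" unfolding m_def by (rule Least_le) (rule lcA)
    then have "q dvd coeff (A * B) m" using low AB deg \<open>degree B \<noteq> 0\<close> by simp
    ultimately have "q dvd coeff A m * coeff B 0" by (simp add: dvd_add_right_iff)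
    then show False using q qAm qB by (simp add: prime_dvd_mult_iff)
  qed
  show ?thesis
  proof (cases "degree (G * H) = 0")
    case True
    have "G \<noteq> 0" "H \<noteq> 0" using lead by auto
    then show ?thesis using True by (simp add: degree_mult_eq)
  next
    case False
    then have "q dvd coeff G 0 * coeff H 0" using low by (simp add: coeff_mult_0[symmetric])
    then have "q dvd coeff G 0 \<or> q dvd coeff H 0" using q by (simp add: prime_dvd_mult_iff)
    then show ?thesis using cofactor_constant[of G H] cofactor_constant[of H G] by (auto simp: mult.commute)
  qed
qed

definition geom_poly :: "nat \<Rightarrow> 'a::comm_semiring_1 poly" where
  "geom_poly n = (\<Sum>i<n. monom 1 i)"

lemma coeff_geom_poly: "coeff (geom_poly n) i = (if i < n then 1 else 0)"
  by (simp add: geom_poly_def coeff_sum)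

lemma degree_geom_poly: "n > 0 \<Longrightarrow> degree (geom_poly n) = n - 1"
  by (rule antisym; (rule degree_le le_degree)?) (auto simp: coeff_geom_poly)

lemma map_poly_geom_poly:
  "f 0 = 0 \<Longrightarrow> f 1 = 1 \<Longrightarrow> map_poly f (geom_poly n) = geom_poly n"
  by (simp add: poly_eq_iff coeff_map_poly coeff_geom_poly)

lemma poly_geom_poly_root_of_unity:
  fixes z :: "'a::field"
  assumes "z ^ n = 1" and "z \<noteq> 1"
  shows "poly (geom_poly n) z = 0"
  using assms by (simp add: geom_poly_def poly_sum poly_monom sum_gp_strict)

lemma x_minus_1_times_geom_poly:
  "[:-1, 1:] * geom_poly n = (monom 1 n - 1 :: 'a::comm_ring_1 poly)"
proof (induction n)
  case (Suc n)
  have step: "[:-1, 1:] * monom (1::'a) n = monom 1 (Suc n) - monom 1 n"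
    by (simp add: monom_Suc algebra_simps)
  have "[:-1, 1:] * geom_poly (Suc n) = [:-1, 1:] * geom_poly n + [:-1, 1:] * monom (1::'a) n"
    by (simp add: geom_poly_def distrib_left)
  also have "\<dots> = monom 1 (Suc n) - 1"
    by (simp only: Suc.IH step) simp
  finally show ?case .
qed (simp add: geom_poly_def)

lemma coeff_one_plus_x_power: "coeff ([:1, 1:] ^ n) i = (of_nat (n choose i) :: 'a::comm_semiring_1)"
proof (cases "i \<le> n")
  case False
  then have "degree ([:1, 1:] ^ n :: 'a poly) < i"
    using degree_power_le[of "[:1, 1:] :: 'a poly" n] by simp
  then show ?thesis using False by (simp add: coeff_eq_0 binomial_eq_0)
qed (use coeff_linear_poly_power[where a = 1 and b = 1] in simp)

lemma pcompose_monom_1: "monom 1 n \<circ>\<^sub>p q = q ^ n"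
  by (induction n) (auto simp: monom_Suc monom_0)

lemma coeff_geom_poly_shift:
  "coeff (geom_poly n \<circ>\<^sub>p [:1, 1:]) k = (of_nat (n choose Suc k) :: 'a::comm_ring_1)"
proof -
  have "pCons 0 (geom_poly n \<circ>\<^sub>p [:1, 1:]) = ([:-1, 1:] \<circ>\<^sub>p [:1, 1:]) * (geom_poly n \<circ>\<^sub>p [:1, 1:] :: 'a poly)"
    by simp
  also have "\<dots> = ([:-1, 1:] * geom_poly n) \<circ>\<^sub>p [:1, 1:]"
    by (rule pcompose_mult[symmetric])
  also have "\<dots> = [:1, 1:] ^ n - 1"
    by (simp only: x_minus_1_times_geom_poly pcompose_diff pcompose_monom_1 pcompose_1)
  finally have "coeff (pCons 0 (geom_poly n \<circ>\<^sub>p [:1, 1:] :: 'a poly)) (Suc k) = coeff ([:1, 1:] ^ n - 1) (Suc k)"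
    by (simp only:)
  then show ?thesis using coeff_one_plus_x_power[of n "Suc k"] by simp
qed

lemma geom_poly_prime_irreducible:
  fixes a b :: "rat poly"
  assumes p: "prime p" and ab: "a * b = geom_poly p"
  shows "degree a = 0 \<or> degree b = 0"
proof -
  have "map_poly rat_of_int (geom_poly p) = a * b" by (simp add: ab map_poly_geom_poly)
  then obtain g h :: "int poly" where gh: "geom_poly p = g * h" "degree g = degree a" "degree h = degree b"
    using rat_to_int_factor by blast
  define G H where "G = g \<circ>\<^sub>p [:1, 1:]" and "H = h \<circ>\<^sub>p [:1, 1:]"
  have GH: "G * H = geom_poly p \<circ>\<^sub>p [:1, 1:]" by (simp add: G_def H_def gh pcompose_mult)
  have p1: "p > 1" using p prime_gt_1_nat by blast
  have deg: "degree (G * H) = p - 1" using p1 by (simp add: GH degree_geom_poly)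
  have coeff_GH: "coeff (G * H) i = int (p choose Suc i)" for i
    unfolding GH by (rule coeff_geom_poly_shift)
  have "degree G = 0 \<or> degree H = 0"
  proof (rule eisenstein_criterion[of "int p"])
    show "prime (int p)" using p by simp
    show "int p dvd coeff (G * H) i" if "i < degree (G * H)" for i
      using that deg p by (simp add: coeff_GH dvd_choose_prime)
    show "\<not> (int p)\<^sup>2 dvd coeff (G * H) 0"
      using p1 by (simp add: coeff_GH power2_eq_square)
    show "\<not> int p dvd lead_coeff (G * H)"
      using p1 by (simp add: deg coeff_GH)
  qed
  then show ?thesis by (simp add: G_def H_def gh)
qed

interpretation of_rat_poly: map_poly_idom_hom "of_rat :: rat \<Rightarrow> complex" ..

lemma cval_add: "cval (a + b) z = cval a z + cval b z"
  and cval_diff: "cval (a - b) z = cval a z - cval b z"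
  and cval_mult: "cval (a * b) z = cval a z * cval b z"
  by (simp_all add: cval_def of_rat_poly.hom_add of_rat_poly.hom_minus of_rat_poly.hom_mult)

lemma cval_const: "cval [:c:] z = of_rat c"
  by (cases "c = 0") (simp_all add: cval_def)

lemma cval_geom_poly_root_of_unity:
  "z ^ n = 1 \<Longrightarrow> z \<noteq> 1 \<Longrightarrow> cval (geom_poly n) z = 0"
  by (simp add: cval_def map_poly_geom_poly poly_geom_poly_root_of_unity)

lemma smult_geom_poly_if_vanishes_at_root_of_unity:
  fixes q :: "rat poly"
  assumes p: "prime p" and z: "z ^ p = 1" "z \<noteq> 1"
    and deg: "degree q < p" and vanish: "cval q z = 0"
  shows "q = smult (coeff q 0) (geom_poly p)"
proof -
  define \<Phi> :: "rat poly" where "\<Phi> = geom_poly p"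
  have p0: "p > 0" using p prime_gt_0_nat by blast
  have "\<Phi> \<noteq> 0" using p0 by (auto simp: \<Phi>_def poly_eq_iff coeff_geom_poly)
  define d where "d = gcd q \<Phi>"
  have "cval d z = 0"
    using bezout_coefficients_fst_snd[of q \<Phi>] vanish cval_geom_poly_root_of_unity[OF z]
    by (metis d_def \<Phi>_def cval_add cval_mult mult_zero_right add_0)
  then have "degree d \<noteq> 0"
    using \<open>\<Phi> \<noteq> 0\<close> by (auto simp: d_def cval_const elim!: degree_eq_zeroE)
  moreover obtain e where de: "\<Phi> = d * e" unfolding d_def by (metis gcd_dvd2 dvdE)
  ultimately have "degree e = 0" using geom_poly_prime_irreducible[OF p] \<Phi>_def by metis
  then have "\<Phi> dvd d" using de \<open>\<Phi> \<noteq> 0\<close> by (auto elim!: degree_eq_zeroE intro: dvd_smult)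
  also have "d dvd q" by (simp add: d_def)
  finally obtain r where qr: "q = \<Phi> * r" by (elim dvdE)
  then have "degree r = 0"
    using deg p0 \<open>\<Phi> \<noteq> 0\<close> degree_mult_eq[of \<Phi> r] by (cases "r = 0") (auto simp: \<Phi>_def degree_geom_poly)
  then show ?thesis using qr p0 by (auto simp: \<Phi>_def coeff_geom_poly elim!: degree_eq_zeroE)
qed

lemma power_mod_eq_if_power_eq_1:
  fixes z :: "'a::monoid_mult"
  assumes "z ^ n = 1"
  shows "z ^ (e mod n) = z ^ e"
proof -
  have "z ^ e = (z ^ n) ^ (e div n) * z ^ (e mod n)"
    by (metis div_mult_mod_eq power_add power_mult mult.commute)
  then show ?thesis using assms by simp
qed

text \<open>The remainder of \<open>h\<close> modulo \<open>x\<^sup>n - 1\<close>.\<close>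

definition fold_exponents :: "nat \<Rightarrow> 'a::comm_semiring_1 poly \<Rightarrow> 'a poly" where
  "fold_exponents n h = (\<Sum>e\<le>degree h. monom (coeff h e) (e mod n))"

lemma coeff_fold_exponents:
  "coeff (fold_exponents n h) s = (\<Sum>e | e \<le> degree h \<and> e mod n = s. coeff h e)"
proof -
  have "coeff (fold_exponents n h) s = (\<Sum>e\<le>degree h. if e mod n = s then coeff h e else 0)"
    by (simp add: fold_exponents_def coeff_sum)
  also have "\<dots> = (\<Sum>e\<in>{e\<in>{..degree h}. e mod n = s}. coeff h e)"
    by (rule sum.inter_filter[symmetric]) simp
  finally show ?thesis by simp
qed

lemma degree_fold_exponents_less:
  assumes "n > 0"
  shows "degree (fold_exponents n h) < n"
proof -
  have "coeff (fold_exponents n h) s = 0" if "s > n - 1" for s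
  proof -
    have "e mod n \<noteq> s" for e using that mod_less_divisor[OF assms, of e] by linarith
    then show ?thesis by (simp add: coeff_fold_exponents)
  qed
  then have "degree (fold_exponents n h) \<le> n - 1"
    by (intro degree_le) simp
  then show ?thesis using assms by simp
qed

lemma cval_fold_exponents:
  assumes "z ^ n = 1"
  shows "cval (fold_exponents n h) z = cval h z"
proof -
  have "cval (fold_exponents n h) z = (\<Sum>e\<le>degree h. of_rat (coeff h e) * z ^ (e mod n))"
    by (simp add: cval_def fold_exponents_def of_rat_poly.hom_sum poly_sum map_poly_monom poly_monom)
  also have "\<dots> = (\<Sum>e\<le>degree h. of_rat (coeff h e) * z ^ e)"
    using assms by (simp add: power_mod_eq_if_power_eq_1)
  also have "\<dots> = cval h z"
    by (simp add: cval_def poly_altdef coeff_map_poly)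
  finally show ?thesis .
qed

lemma finite_nonzero_coeffs: "finite {i. coeff f i \<noteq> 0}"
  by (rule finite_subset[of _ "{..degree f}"]) (auto intro: le_degree)

lemma nterms_diff_le: "nterms (f - g) \<le> nterms f + nterms (g :: 'a::ab_group_add poly)"
proof -
  have "nterms (f - g) \<le> card ({i. coeff f i \<noteq> 0} \<union> {i. coeff g i \<noteq> 0})"
    unfolding nterms_def by (intro card_mono) (auto simp: finite_nonzero_coeffs)
  also have "\<dots> \<le> nterms f + nterms g" unfolding nterms_def by (rule card_Un_le)
  finally show ?thesis .
qed

lemma exponent_collision_if_vanishes_at_root_of_unity:
  fixes h :: "rat poly"
  assumes p: "prime p" and z: "z ^ p = 1" "z \<noteq> 1"
    and sparse: "nterms h < p" and vanish: "cval h z = 0" and e0: "coeff h e0 \<noteq> 0"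
  shows "\<exists>e. coeff h e \<noteq> 0 \<and> e \<noteq> e0 \<and> e mod p = e0 mod p"
proof (rule ccontr)
  assume alone: "\<not> ?thesis"
  have p0: "p > 0" using p prime_gt_0_nat by blast
  define q where "q = fold_exponents p h"
  have q_eq: "q = smult (coeff q 0) (geom_poly p)"
  proof (rule smult_geom_poly_if_vanishes_at_root_of_unity[OF p z])
    show "degree q < p" unfolding q_def by (rule degree_fold_exponents_less[OF p0])
    show "cval q z = 0" unfolding q_def cval_fold_exponents[OF z(1)] by (rule vanish)
  qed
  have q_const: "coeff q s = coeff q 0" if "s < p" for s
  proof -
    from q_eq have "coeff q s = coeff (smult (coeff q 0) (geom_poly p)) s"
      by (rule arg_cong[where f = "\<lambda>r. coeff r s"])
    also have "\<dots> = coeff q 0" using that by (simp add: coeff_geom_poly)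
    finally show ?thesis .
  qed
  have "\<not> {..<p} \<subseteq> (\<lambda>e. e mod p) ` {i. coeff h i \<noteq> 0}"
  proof
    assume "{..<p} \<subseteq> (\<lambda>e. e mod p) ` {i. coeff h i \<noteq> 0}"
    then have "card {..<p} \<le> card ((\<lambda>e. e mod p) ` {i. coeff h i \<noteq> 0})"
      by (intro card_mono finite_imageI finite_nonzero_coeffs)
    then have "p \<le> card ((\<lambda>e. e mod p) ` {i. coeff h i \<noteq> 0})" by simp
    also have "\<dots> \<le> nterms h" unfolding nterms_def by (rule card_image_le[OF finite_nonzero_coeffs])
    finally show False using sparse by simp
  qed
  then obtain s where s: "s < p" "\<And>e. coeff h e \<noteq> 0 \<Longrightarrow> e mod p \<noteq> s" by blast
  then have "coeff q s = 0" unfolding q_def coeff_fold_exponents by (intro sum.neutral) blast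
  moreover have "coeff q (e0 mod p) = coeff h e0"
  proof -
    have "{e. e \<le> degree h \<and> e mod p = e0 mod p} = insert e0 {e. e \<le> degree h \<and> e mod p = e0 mod p \<and> e \<noteq> e0}"
      using e0 le_degree by auto
    moreover have "(\<Sum>e | e \<le> degree h \<and> e mod p = e0 mod p \<and> e \<noteq> e0. coeff h e) = 0"
      using alone by (intro sum.neutral) auto
    ultimately show ?thesis by (simp add: q_def coeff_fold_exponents)
  qed
  ultimately show False using q_const[of s] q_const[of "e0 mod p"] s(1) p0 e0 by simp
qed

lemma prod_primes_dvd:
  fixes n :: nat
  assumes "finite P" and "\<And>q. q \<in> P \<Longrightarrow> prime q \<and> q dvd n"
  shows "\<Prod>P dvd n"
proof (cases "n = 0")
  case False
  have "P \<subseteq> prime_factors n" using assms(2) False by (auto intro: prime_factorsI)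
  then have "mset_set P \<subseteq># mset_set (prime_factors n)"
    using assms(1) by simp
  also have "\<dots> \<subseteq># prime_factorization n" by (rule mset_set_set_mset_msubset)
  finally have "prod_mset (mset_set P) dvd prod_mset (prime_factorization n)"
    by (rule prod_mset_subset_imp_dvd)
  then show ?thesis using False by (simp add: prod_mset_prime_factorization prod_unfold_prod_mset)
qed simp

lemma prod_primes_le_degree_power_if_vanishes:
  fixes h :: "rat poly" and P :: "nat set"
  assumes "h \<noteq> 0" and "finite P"
    and roots: "\<And>p. p \<in> P \<Longrightarrow> prime p \<and> nterms h < p \<and> (\<exists>z. z ^ p = 1 \<and> z \<noteq> 1 \<and> cval h z = 0)"
  shows "\<Prod>P \<le> degree h ^ (nterms h - 1)"
proof -
  define n where "n = degree h"
  define S where "S = {i. coeff h i \<noteq> 0} - {n}"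
  have lead: "coeff h n \<noteq> 0" using assms(1) by (simp add: n_def)
  have S_less: "e < n" if "e \<in> S" for e
    using that le_degree by (fastforce simp: S_def n_def)
  have "finite S" by (simp add: S_def finite_nonzero_coeffs)
  define N where "N = (\<Prod>e\<in>S. n - e)"
  have "p dvd N" if "p \<in> P" for p
  proof -
    from roots[OF that] obtain z where p: "prime p" "nterms h < p"
      and z: "z ^ p = 1" "z \<noteq> 1" "cval h z = 0" by blast
    obtain e where e: "coeff h e \<noteq> 0" "e \<noteq> n" "e mod p = n mod p"
      using exponent_collision_if_vanishes_at_root_of_unity[OF p(1) z(1,2) p(2) z(3) lead] by blast
    then have "e \<in> S" by (simp add: S_def)
    then have "p dvd n - e" using e(3) S_less[of e] mod_eq_dvd_iff_nat[of e n p] by simp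
    also have "n - e dvd N" unfolding N_def using \<open>finite S\<close> \<open>e \<in> S\<close> by (rule dvd_prodI)
    finally show ?thesis .
  qed
  then have "\<Prod>P dvd N" using assms(2) roots by (intro prod_primes_dvd) auto
  moreover have "N > 0" using S_less by (simp add: N_def prod_pos)
  ultimately have "\<Prod>P \<le> N" by (rule dvd_imp_le)
  also have "N \<le> (\<Prod>e\<in>S. n)" unfolding N_def by (intro prod_mono) simp
  also have "\<dots> = n ^ (nterms h - 1)"
    using lead by (simp add: S_def nterms_def card_Diff_singleton finite_nonzero_coeffs)
  finally show ?thesis by (simp add: n_def)
qed

lemma power_le_power_if_ln_bound:
  fixes a b k n :: nat
  assumes "a > 0" and "b > 1" and "real n * ln a / ln b \<le> real k"
  shows "a ^ n \<le> b ^ k"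
proof -
  have "ln (real a ^ n) \<le> ln (real b ^ k)"
    using assms by (simp add: ln_realpow pos_divide_le_eq)
  then have "real a ^ n \<le> real b ^ k" using assms by simp
  then show ?thesis by (simp only: Power.of_nat_power[symmetric] of_nat_le_iff)
qed

lemma eq_if_agree_at_prime_roots_of_unity:
  fixes f g :: "rat poly" and p :: "'i \<Rightarrow> nat" and \<zeta> :: "'i \<Rightarrow> complex"
  assumes "finite S" and "inj_on p S"
    and agree: "\<And>i. i \<in> S \<Longrightarrow>
      prime (p i) \<and> t < p i \<and> \<zeta> i ^ p i = 1 \<and> \<zeta> i \<noteq> 1 \<and> cval f (\<zeta> i) = cval g (\<zeta> i)"
    and "nterms f + nterms g \<le> t" and "degree f \<le> D" and "degree g \<le> D" and "D > 0"
    and "D ^ t < (t + 1) ^ card S"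
  shows "f = g"
proof (rule ccontr)
  assume "f \<noteq> g"
  define h where "h = g - f"
  have "h \<noteq> 0" using \<open>f \<noteq> g\<close> by (simp add: h_def)
  have terms_h: "nterms h \<le> t" using nterms_diff_le[of g f] assms(4) by (simp add: h_def)
  have "(t + 1) ^ card S = (\<Prod>i\<in>S. t + 1)" by simp
  also have "\<dots> \<le> (\<Prod>i\<in>S. p i)" using agree by (intro prod_mono) (auto simp: Suc_le_eq)
  also have "\<dots> = \<Prod>(p ` S)" using assms(2) by (simp add: prod.reindex)
  also have "\<dots> \<le> degree h ^ (nterms h - 1)"
  proof (rule prod_primes_le_degree_power_if_vanishes)
    fix q assume "q \<in> p ` S"
    then obtain i where "i \<in> S" "q = p i" by blast
    with agree[of i] terms_h show "prime q \<and> nterms h < q \<and> (\<exists>z. z ^ q = 1 \<and> z \<noteq> 1 \<and> cval h z = 0)"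
      by (auto simp: h_def cval_diff)
  qed (use \<open>h \<noteq> 0\<close> assms(1) in auto)
  also have "\<dots> \<le> D ^ (nterms h - 1)"
    using degree_diff_le_max[of g f] assms(5,6) by (intro power_mono) (simp_all add: h_def)
  also have "\<dots> \<le> D ^ t" using terms_h assms(7) by (intro power_increasing) auto
  finally show False using assms(8) by simp
qed

theorem corollary3:
  fixes T D E k :: nat
    and p :: "nat \<Rightarrow> nat"
    and \<zeta> y \<epsilon> :: "nat \<Rightarrow> complex"
    and f g :: "rat poly"
  assumes "T > 0" and "D > 0" and "k > 0"
    and "real k \<ge> 2 * real T * ln (real D) / ln (2 * real T)"
    and "strict_mono_on {1..k + 2 * E} p"
    and "\<forall>i \<in> {1..k + 2 * E}. prime (p i)"
    and "2 * T < p 1"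
    and "\<forall>i \<in> {1..k + 2 * E}. \<zeta> i ^ p i = 1 \<and> \<zeta> i \<noteq> 1"
    and "nterms f \<le> T" and "degree f \<le> D"
    and "\<forall>i \<in> {1..k + 2 * E}. y i = cval f (\<zeta> i) + \<epsilon> i"
    and "card {i \<in> {1..k + 2 * E}. \<epsilon> i \<noteq> 0} \<le> E"
    and "nterms g \<le> T" and "degree g \<le> D"
    and "card {i \<in> {1..k + 2 * E}. cval g (\<zeta> i) = y i} \<ge> k + E"
  shows "g = f"
proof -
  define I where "I = {1..k + 2 * E}"
  define S where "S = {i \<in> I. cval g (\<zeta> i) = y i} - {i \<in> I. \<epsilon> i \<noteq> 0}"
  have "k \<le> card S"
    using diff_card_le_card_Diff[of "{i \<in> I. \<epsilon> i \<noteq> 0}" "{i \<in> I. cval g (\<zeta> i) = y i}"] assms(12,15)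
    by (simp add: S_def I_def)
  have "p 1 \<le> p i" if "i \<in> I" for i
    using that assms(3,5) mono_onD[OF strict_mono_on_imp_mono_on] by (fastforce simp: I_def)
  then have agree: "prime (p i) \<and> 2 * T < p i \<and> \<zeta> i ^ p i = 1 \<and> \<zeta> i \<noteq> 1 \<and> cval f (\<zeta> i) = cval g (\<zeta> i)"
    if "i \<in> S" for i
    using that assms(6,7,8,11) by (fastforce simp: S_def I_def)
  have "inj_on p S" using strict_mono_on_imp_inj_on[OF assms(5)] by (rule inj_on_subset) (auto simp: S_def I_def)
  have "D ^ (2 * T) \<le> (2 * T) ^ k"
    using assms(1,2,4) by (intro power_le_power_if_ln_bound) simp_all
  also have "\<dots> < (2 * T + 1) ^ k" using assms(3) by (intro power_strict_mono) auto
  also have "\<dots> \<le> (2 * T + 1) ^ card S" using \<open>k \<le> card S\<close> by (simp add: power_increasing)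
  finally have "D ^ (2 * T) < (2 * T + 1) ^ card S" .
  have "f = g"
    by (rule eq_if_agree_at_prime_roots_of_unity[OF _ \<open>inj_on p S\<close> agree])
      (use assms(2,9,10,13,14) \<open>D ^ (2 * T) < (2 * T + 1) ^ card S\<close> in \<open>auto simp: S_def I_def\<close>)
  then show "g = f" ..
qed

end
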